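(* Let $d\ge3$, $n\ge1$ and $0\le c<\frac1{d(d-1)}$. For $\epsilon\ge0$ with $c+\epsilon\le\frac1{d(d-1)}$ let $$\rho(c,\epsilon)=\Big(\frac1{2d}-\frac{d-1}2(c+\epsilon)\Big)\sum_{i=0}^{d-1}|ii\rangle\langle ii|+\Big(\frac1{d(d-1)}+\epsilon\Big)\sum_{i<j}|\psi^-_{ij}\rangle\langle\psi^-_{ij}|+c\sum_{i<j}|\psi^+_{ij}\rangle\langle\psi^+_{ij}|.$$ Then there exists $\epsilon_0=\epsilon_0(c,n)>0$ such that for all $0\le\epsilon\le\epsilon_0$, $\rho(c,\epsilon)$ is pseudo $n$-copy undistillable, i.e. $\langle\psi|(\rho(c,\epsilon)^{PT})^{\otimes n}|\psi\rangle\ge0$ for every $|\psi\rangle\in(\mathbb{C}^d)^{\otimes n}_A\otimes(\mathbb{C}^d)^{\otimes n}_B$ of Schmidt rank two.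
   Context: $|\psi^{\pm}_{ij}\rangle=\frac1{\sqrt2}(|ij\rangle\pm|ji\rangle)$, sums over $0\le i<j\le d-1$. $\rho^{PT}$ is the partial transpose on the second factor of $\mathbb{C}^d\otimes\mathbb{C}^d$. The space $(\mathbb{C}^d\otimes\mathbb{C}^d)^{\otimes n}$ is regarded as bipartite with the first factor of each copy belonging to $A$; Schmidt rank is with respect to this bipartition. *)

theory Defs
  imports Complex_Main "HOL-Library.Complex_Order"
begin

text \<open>Two-qudit space C^d (x) C^d: basis vectors indexed by pairs (i,j), i,j < d.
  Vectors and operators are represented by their coordinates / matrix entries.\<close>

definition ket2 :: "nat \<Rightarrow> nat \<Rightarrow> nat \<times> nat \<Rightarrow> complex" where
  "ket2 i j = (\<lambda>x. if x = (i, j) then 1 else 0)"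

definition psi_pm :: "complex \<Rightarrow> nat \<Rightarrow> nat \<Rightarrow> nat \<times> nat \<Rightarrow> complex" where
  "psi_pm s i j = (\<lambda>x. (ket2 i j x + s * ket2 j i x) / complex_of_real (sqrt 2))"

definition outer :: "('a \<Rightarrow> complex) \<Rightarrow> 'a \<Rightarrow> 'a \<Rightarrow> complex" where
  "outer v = (\<lambda>x y. v x * cnj (v y))"

definition rho :: "nat \<Rightarrow> real \<Rightarrow> real \<Rightarrow> nat \<times> nat \<Rightarrow> nat \<times> nat \<Rightarrow> complex" where
  "rho d c \<epsilon> = (\<lambda>x y.
      complex_of_real (1 / (2 * real d) - (real d - 1) / 2 * (c + \<epsilon>))
        * (\<Sum>i<d. outer (ket2 i i) x y)
    + complex_of_real (1 / (real d * (real d - 1)) + \<epsilon>)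
        * (\<Sum>i<d. \<Sum>j\<in>{i<..<d}. outer (psi_pm (-1) i j) x y)
    + complex_of_real c
        * (\<Sum>i<d. \<Sum>j\<in>{i<..<d}. outer (psi_pm 1 i j) x y))"

definition ptrans :: "(nat \<times> nat \<Rightarrow> nat \<times> nat \<Rightarrow> complex) \<Rightarrow> nat \<times> nat \<Rightarrow> nat \<times> nat \<Rightarrow> complex" where
  "ptrans M = (\<lambda>(i1, j1) (i2, j2). M (i1, j2) (i2, j1))"

text \<open>Index set of (C^d)^{(x) n}: lists of length n with entries < d.\<close>
definition idx :: "nat \<Rightarrow> nat \<Rightarrow> nat list set" where
  "idx d n = {xs. length xs = n \<and> set xs \<subseteq> {..<d}}"

text \<open>n-fold tensor power of a two-qudit operator, regrouped as A = first factors,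
  B = second factors: entry <a,b| M^{(x)n} |a',b'> = prod_k <a_k b_k| M |a'_k b'_k>.\<close>
definition tpow :: "nat \<Rightarrow> (nat \<times> nat \<Rightarrow> nat \<times> nat \<Rightarrow> complex)
    \<Rightarrow> nat list \<Rightarrow> nat list \<Rightarrow> nat list \<Rightarrow> nat list \<Rightarrow> complex" where
  "tpow n M a b a' b' = (\<Prod>k<n. M (a ! k, b ! k) (a' ! k, b' ! k))"

text \<open>A vector psi in (C^d)^{(x)n}_A (x) (C^d)^{(x)n}_B is given by coefficients psi a b,
  a, b \<in> idx d n. Its Schmidt rank is the least r such that psi is a sum of r product vectors.\<close>
definition schmidt_rank :: "nat \<Rightarrow> nat \<Rightarrow> (nat list \<Rightarrow> nat list \<Rightarrow> complex) \<Rightarrow> nat" where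
  "schmidt_rank d n \<psi> = (LEAST r. \<exists>u v :: nat \<Rightarrow> nat list \<Rightarrow> complex.
      \<forall>a\<in>idx d n. \<forall>b\<in>idx d n. \<psi> a b = (\<Sum>k<r. u k a * v k b))"

definition expval :: "nat \<Rightarrow> nat \<Rightarrow> (nat \<times> nat \<Rightarrow> nat \<times> nat \<Rightarrow> complex)
    \<Rightarrow> (nat list \<Rightarrow> nat list \<Rightarrow> complex) \<Rightarrow> complex" where
  "expval d n M \<psi> = (\<Sum>a\<in>idx d n. \<Sum>b\<in>idx d n. \<Sum>a'\<in>idx d n. \<Sum>b'\<in>idx d n.
      cnj (\<psi> a b) * tpow n M a b a' b' * \<psi> a' b')"

end

(*
  At eps = 0 the partial transpose of rho(c, 0) is positive semidefinite: it is the Gram matrix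
  of the vectors sqrt mu |ij> (i ~= j) and sqrt lambda (|ii> - 1/d sum_k |kk>), whose orthogonal
  complement is spanned by sum_i |ii>.  So the n-copy expectation value is the sum of the squared
  moduli of the coefficients of psi against tensor products of these vectors.  Peeling off one
  copy at a time shows that these coefficients cannot all vanish for a nonzero psi of Schmidt
  rank at most two: the blocks psi(i_, j_) with i ~= j would vanish and those with i = j would
  have equal coefficients, but a rank-two matrix cannot be block diagonal with three nonzero
  blocks.  Gram-Schmidt gives unit vectors of Schmidt rank two a bounded parametrisation, so by
  compactness the expectation value is at least some m > 0 on them.  The entries of
  rho(c, eps)^PT are bounded by 1 and move by at most d eps, so the expectation value moves by
  at most d^(4n) n d eps, and eps0 = m / (d^(4n) n d) works.
*)
theory Submission
  imports Defs "HOL-Analysis.Analysis"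
begin

section \<open>Lists of fixed length\<close>

definition lists_of_len :: "'a set \<Rightarrow> nat \<Rightarrow> 'a list set" where
  "lists_of_len A n = {xs. length xs = n \<and> set xs \<subseteq> A}"

lemma idx_eq_lists_of_len: "idx d n = lists_of_len {..<d} n"
  by (simp add: idx_def lists_of_len_def)

lemma finite_lists_of_len: "finite A \<Longrightarrow> finite (lists_of_len A n)"
  using finite_lists_length_eq[of A n] by (simp add: lists_of_len_def conj_commute)

lemma lists_of_len_0 [simp]: "lists_of_len A 0 = {[]}"
  by (auto simp: lists_of_len_def)

lemma Cons_in_lists_of_len_Suc [simp]:
  "x # xs \<in> lists_of_len A (Suc n) \<longleftrightarrow> x \<in> A \<and> xs \<in> lists_of_len A n"
  by (auto simp: lists_of_len_def)

lemma lists_of_len_SucE: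
  assumes "ys \<in> lists_of_len A (Suc n)"
  obtains x xs where "ys = x # xs" "x \<in> A" "xs \<in> lists_of_len A n"
  using assms by (cases ys) (auto simp: lists_of_len_def)

lemma sum_lists_of_len_Suc:
  assumes "finite A"
  shows "(\<Sum>ys\<in>lists_of_len A (Suc n). f ys) = (\<Sum>x\<in>A. \<Sum>xs\<in>lists_of_len A n. f (x # xs))"
proof -
  have "lists_of_len A (Suc n) = (\<lambda>(x, xs). x # xs) ` (A \<times> lists_of_len A n)"
    by (auto elim: lists_of_len_SucE)
  moreover have "inj_on (\<lambda>(x, xs). x # xs) (A \<times> lists_of_len A n)"
    by (auto simp: inj_on_def)
  ultimately show ?thesis
    by (simp add: sum.reindex sum.cartesian_product split_def)
qed

lemma prod_sum_eq_sum_lists_of_len: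
  fixes h :: "nat \<Rightarrow> 'r \<Rightarrow> 'a::comm_semiring_1"
  assumes "finite R"
  shows "(\<Prod>k<n. \<Sum>r\<in>R. h k r) = (\<Sum>rs\<in>lists_of_len R n. \<Prod>k<n. h k (rs ! k))"
proof (induction n arbitrary: h)
  case 0
  then show ?case by simp
next
  case (Suc n)
  have "(\<Prod>k<Suc n. \<Sum>r\<in>R. h k r) = (\<Sum>r\<in>R. h 0 r) * (\<Sum>rs\<in>lists_of_len R n. \<Prod>k<n. h (Suc k) (rs ! k))"
    by (simp only: prod.lessThan_Suc_shift Suc.IH)
  also have "\<dots> = (\<Sum>rs\<in>lists_of_len R (Suc n). \<Prod>k<Suc n. h k (rs ! k))"
    unfolding sum_lists_of_len_Suc[OF assms] sum_product
    by (simp only: prod.lessThan_Suc_shift nth_Cons_0 nth_Cons_Suc)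
  finally show ?case .
qed

lemma finite_idx: "finite (idx d n)"
  by (simp add: idx_eq_lists_of_len finite_lists_of_len)

lemma card_idx: "card (idx d n) = d ^ n"
  using card_lists_length_eq[of "{..<d}" n] by (simp add: idx_def conj_commute)

lemma sum_idx_Suc: "(\<Sum>a\<in>idx d (Suc n). f a) = (\<Sum>i<d. \<Sum>a\<in>idx d n. f (i # a))"
  by (simp add: idx_eq_lists_of_len sum_lists_of_len_Suc)

lemma Cons_in_idx_Suc [simp]: "i # a \<in> idx d (Suc n) \<longleftrightarrow> i < d \<and> a \<in> idx d n"
  by (simp add: idx_eq_lists_of_len)

lemma idx_SucE:
  assumes "x \<in> idx d (Suc n)"
  obtains i a where "x = i # a" "i < d" "a \<in> idx d n"
  using assms by (auto simp: idx_eq_lists_of_len elim: lists_of_len_SucE)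

section \<open>Expectation values in tensor powers\<close>

lemma expval_eq_sum_pairs:
  "expval d n M \<phi> = (\<Sum>(a, b)\<in>idx d n \<times> idx d n. \<Sum>(a', b')\<in>idx d n \<times> idx d n.
      cnj (\<phi> a b) * tpow n M a b a' b' * \<phi> a' b')"
  by (simp add: expval_def sum.cartesian_product')

lemma expval_cong:
  assumes "\<And>a b. a \<in> idx d n \<Longrightarrow> b \<in> idx d n \<Longrightarrow> \<phi> a b = \<psi> a b"
  shows "expval d n M \<phi> = expval d n M \<psi>"
  unfolding expval_def using assms by (intro sum.cong refl) auto

lemma expval_scale:
  "expval d n M (\<lambda>a b. x * \<phi> a b) = complex_of_real ((cmod x)\<^sup>2) * expval d n M \<phi>"
proof -
  have "cnj (x * u) * t * (x * v) = complex_of_real ((cmod x)\<^sup>2) * (cnj u * t * v)" for u t v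
    unfolding complex_norm_square by (simp add: mult_ac)
  then show ?thesis
    unfolding expval_def sum_distrib_left by (intro sum.cong refl) blast
qed

lemma tpow_conj_commute:
  assumes "\<And>x y. M y x = cnj (M x y)"
  shows "tpow n M a' b' a b = cnj (tpow n M a b a' b')"
  unfolding tpow_def cnj_prod by (intro prod.cong refl) (rule assms)

lemma expval_hermitian_real:
  assumes "\<And>x y. M y x = cnj (M x y)"
  shows "expval d n M \<phi> \<in> \<real>"
proof -
  let ?P = "idx d n \<times> idx d n"
  have "cnj (expval d n M \<phi>) =
      (\<Sum>(a, b)\<in>?P. \<Sum>(a', b')\<in>?P. \<phi> a b * tpow n M a' b' a b * cnj (\<phi> a' b'))"
    unfolding expval_eq_sum_pairs by (simp add: case_prod_beta tpow_conj_commute[OF assms, symmetric])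
  also have "\<dots> = (\<Sum>(a', b')\<in>?P. \<Sum>(a, b)\<in>?P. \<phi> a b * tpow n M a' b' a b * cnj (\<phi> a' b'))"
    unfolding split_def by (rule sum.swap)
  also have "\<dots> = expval d n M \<phi>"
    unfolding expval_eq_sum_pairs by (simp add: case_prod_beta mult_ac)
  finally show ?thesis
    by (metis Reals_cnj_iff)
qed

lemma norm_tpow_diff_le:
  assumes "\<And>x y. cmod (M x y) \<le> 1" "\<And>x y. cmod (N x y) \<le> 1" "\<And>x y. cmod (M x y - N x y) \<le> \<delta>"
  shows "cmod (tpow n M a b a' b' - tpow n N a b a' b') \<le> real n * \<delta>"
proof -
  have "cmod (tpow n M a b a' b' - tpow n N a b a' b')
      \<le> (\<Sum>k<n. cmod (M (a ! k, b ! k) (a' ! k, b' ! k) - N (a ! k, b ! k) (a' ! k, b' ! k)))"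
    unfolding tpow_def by (rule norm_prod_diff) (use assms in auto)
  also have "\<dots> \<le> real n * \<delta>"
    using sum_bounded_above[of "{..<n}" _ \<delta>] assms(3) by simp
  finally show ?thesis .
qed

lemma norm_expval_diff_le:
  assumes "\<And>x y. cmod (M x y) \<le> 1" "\<And>x y. cmod (N x y) \<le> 1" "\<And>x y. cmod (M x y - N x y) \<le> \<delta>"
    and "\<And>a b. a \<in> idx d n \<Longrightarrow> b \<in> idx d n \<Longrightarrow> cmod (\<phi> a b) \<le> 1"
  shows "cmod (expval d n M \<phi> - expval d n N \<phi>) \<le> real (card (idx d n)) ^ 4 * (real n * \<delta>)"
proof -
  let ?P = "idx d n \<times> idx d n"
  have "0 \<le> \<delta>"
    using order_trans[OF norm_ge_zero assms(3)] .
  have "expval d n M \<phi> - expval d n N \<phi> = (\<Sum>(a, b)\<in>?P. \<Sum>(a', b')\<in>?P.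
      cnj (\<phi> a b) * (tpow n M a b a' b' - tpow n N a b a' b') * \<phi> a' b')"
    unfolding expval_eq_sum_pairs by (simp add: case_prod_beta sum_subtractf algebra_simps)
  also have "cmod \<dots> \<le> (\<Sum>(a, b)\<in>?P. \<Sum>(a', b')\<in>?P. real n * \<delta>)"
  proof -
    have "cmod (cnj (\<phi> a b) * (tpow n M a b a' b' - tpow n N a b a' b') * \<phi> a' b')
        \<le> 1 * (real n * \<delta>) * 1"
      if "a \<in> idx d n" "b \<in> idx d n" "a' \<in> idx d n" "b' \<in> idx d n" for a b a' b'
      unfolding norm_mult complex_mod_cnj
      by (intro mult_mono norm_tpow_diff_le assms that) (use \<open>0 \<le> \<delta>\<close> in auto)
    then show ?thesis
      by (force intro!: sum_norm_le)
  qed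
  also have "\<dots> = real (card (idx d n)) ^ 4 * (real n * \<delta>)"
    by (simp add: card_cartesian_product power4_eq_xxxx)
  finally show ?thesis .
qed

definition tensor_inner :: "nat \<Rightarrow> nat \<Rightarrow> ('r \<Rightarrow> nat \<times> nat \<Rightarrow> complex) \<Rightarrow> 'r list
    \<Rightarrow> (nat list \<Rightarrow> nat list \<Rightarrow> complex) \<Rightarrow> complex" where
  "tensor_inner d n w rs \<phi> =
     (\<Sum>a\<in>idx d n. \<Sum>b\<in>idx d n. cnj (\<Prod>k<n. w (rs ! k) (a ! k, b ! k)) * \<phi> a b)"

lemma tpow_gram:
  assumes "finite R" "\<And>x y. M x y = (\<Sum>r\<in>R. w r x * cnj (w r y))"
  shows "tpow n M a b a' b' = (\<Sum>rs\<in>lists_of_len R n.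
    (\<Prod>k<n. w (rs ! k) (a ! k, b ! k)) * cnj (\<Prod>k<n. w (rs ! k) (a' ! k, b' ! k)))"
  unfolding tpow_def assms(2) prod_sum_eq_sum_lists_of_len[OF assms(1)]
  by (simp add: prod.distrib cnj_prod)

lemma expval_gram:
  assumes "finite R" "\<And>x y. M x y = (\<Sum>r\<in>R. w r x * cnj (w r y))"
  shows "expval d n M \<phi> =
    (\<Sum>rs\<in>lists_of_len R n. complex_of_real ((cmod (tensor_inner d n w rs \<phi>))\<^sup>2))"
proof -
  let ?W = "\<lambda>rs a b. \<Prod>k<n. w (rs ! k) (a ! k, b ! k)"
  let ?I = "idx d n" and ?L = "lists_of_len R n"
  have "expval d n M \<phi> = (\<Sum>a\<in>?I. \<Sum>b\<in>?I. \<Sum>a'\<in>?I. \<Sum>b'\<in>?I. \<Sum>rs\<in>?L.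
      (?W rs a b * cnj (\<phi> a b)) * (cnj (?W rs a' b') * \<phi> a' b'))"
    unfolding expval_def tpow_gram[OF assms] sum_distrib_left sum_distrib_right
    by (simp only: mult_ac)
  also have "\<dots> = (\<Sum>rs\<in>?L. \<Sum>a\<in>?I. \<Sum>b\<in>?I. \<Sum>a'\<in>?I. \<Sum>b'\<in>?I.
      (?W rs a b * cnj (\<phi> a b)) * (cnj (?W rs a' b') * \<phi> a' b'))"
    by (simp only: sum.swap[of _ ?L])
  also have "\<dots> = (\<Sum>rs\<in>?L. cnj (tensor_inner d n w rs \<phi>) * tensor_inner d n w rs \<phi>)"
    unfolding tensor_inner_def cnj_sum by (simp only: sum_distrib_right) (simp add: sum_distrib_left mult_ac)
  also have "\<dots> = (\<Sum>rs\<in>?L. complex_of_real ((cmod (tensor_inner d n w rs \<phi>))\<^sup>2))"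
    by (simp only: complex_norm_square mult.commute)
  finally show ?thesis .
qed

lemma tensor_inner_Cons:
  "tensor_inner d (Suc n) w (r # rs) \<phi> =
    (\<Sum>i<d. \<Sum>j<d. cnj (w r (i, j)) * tensor_inner d n w rs (\<lambda>a b. \<phi> (i # a) (j # b)))"
proof -
  have "tensor_inner d (Suc n) w (r # rs) \<phi> = (\<Sum>i<d. \<Sum>a\<in>idx d n. \<Sum>j<d. \<Sum>b\<in>idx d n.
      cnj (w r (i, j)) * (cnj (\<Prod>k<n. w (rs ! k) (a ! k, b ! k)) * \<phi> (i # a) (j # b)))"
    unfolding tensor_inner_def sum_idx_Suc
    by (simp add: prod.lessThan_Suc_shift del: prod.lessThan_Suc) (simp add: mult_ac)
  also have "\<dots> = (\<Sum>i<d. \<Sum>j<d. \<Sum>a\<in>idx d n. \<Sum>b\<in>idx d n.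
      cnj (w r (i, j)) * (cnj (\<Prod>k<n. w (rs ! k) (a ! k, b ! k)) * \<phi> (i # a) (j # b)))"
    by (intro sum.cong refl) (rule sum.swap)
  also have "\<dots> = (\<Sum>i<d. \<Sum>j<d. cnj (w r (i, j)) * tensor_inner d n w rs (\<lambda>a b. \<phi> (i # a) (j # b)))"
    unfolding tensor_inner_def by (simp add: sum_distrib_left)
  finally show ?thesis .
qed

section \<open>Vectors of Schmidt rank at most two\<close>

definition rank_le2 :: "'a set \<Rightarrow> 'b set \<Rightarrow> ('a \<Rightarrow> 'b \<Rightarrow> complex) \<Rightarrow> bool" where
  "rank_le2 A B \<phi> \<longleftrightarrow> (\<exists>u0 v0 u1 v1. \<forall>a\<in>A. \<forall>b\<in>B. \<phi> a b = u0 a * v0 b + u1 a * v1 b)"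

lemma rank_le2_scale:
  assumes "rank_le2 A B \<phi>"
  shows "rank_le2 A B (\<lambda>a b. x * \<phi> a b)"
proof -
  obtain u0 v0 u1 v1 where "\<forall>a\<in>A. \<forall>b\<in>B. \<phi> a b = u0 a * v0 b + u1 a * v1 b"
    using assms by (auto simp: rank_le2_def)
  then show ?thesis
    unfolding rank_le2_def
    by (intro exI[of _ "\<lambda>a. x * u0 a"] exI[of _ v0] exI[of _ "\<lambda>a. x * u1 a"] exI[of _ v1])
      (simp add: algebra_simps)
qed

lemma rank_le2_slice:
  assumes "rank_le2 (idx d (Suc n)) (idx d (Suc n)) \<phi>" "i < d" "j < d"
  shows "rank_le2 (idx d n) (idx d n) (\<lambda>a b. \<phi> (i # a) (j # b))"
proof -
  obtain u0 v0 u1 v1 where "\<forall>a\<in>idx d (Suc n). \<forall>b\<in>idx d (Suc n). \<phi> a b = u0 a * v0 b + u1 a * v1 b"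
    using assms(1) by (auto simp: rank_le2_def)
  then show ?thesis
    unfolding rank_le2_def using assms(2,3)
    by (intro exI[of _ "\<lambda>a. u0 (i # a)"] exI[of _ "\<lambda>b. v0 (j # b)"] exI[of _ "\<lambda>a. u1 (i # a)"]
        exI[of _ "\<lambda>b. v1 (j # b)"]) simp
qed

lemma rank_le2_diagonal_3x3_degenerate:
  fixes x y z w :: "nat \<Rightarrow> 'a::idom"
  assumes "\<And>i j. i < 3 \<Longrightarrow> j < 3 \<Longrightarrow> i \<noteq> j \<Longrightarrow> x i * y j + z i * w j = 0"
  shows "\<exists>i<3. x i * y i + z i * w i = 0"
proof -
  define N where "N i j = x i * y j + z i * w j" for i j
  have "N 0 0 * (N 1 1 * N 2 2 - N 1 2 * N 2 1) - N 0 1 * (N 1 0 * N 2 2 - N 1 2 * N 2 0)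
      + N 0 2 * (N 1 0 * N 2 1 - N 1 1 * N 2 0) = 0"
    unfolding N_def by (simp add: algebra_simps)
  moreover have "N 0 1 = 0" "N 0 2 = 0" "N 1 2 = 0" "N 2 1 = 0"
    unfolding N_def by (simp_all add: assms)
  ultimately have "N 0 0 * N 1 1 * N 2 2 = 0"
    by (simp add: algebra_simps)
  then have "N 0 0 = 0 \<or> N 1 1 = 0 \<or> N 2 2 = 0"
    by simp
  moreover have "(0::nat) < 3" "(1::nat) < 3" "(2::nat) < 3"
    by simp_all
  ultimately show ?thesis
    unfolding N_def by blast
qed

lemma rank_le2_block_diagonal_obtains_zero_block:
  assumes "d \<ge> 3" "rank_le2 (idx d (Suc n)) (idx d (Suc n)) \<phi>"
    and "\<And>i j a b. i < d \<Longrightarrow> j < d \<Longrightarrow> i \<noteq> j \<Longrightarrow> a \<in> idx d n \<Longrightarrow> b \<in> idx d n \<Longrightarrow> \<phi> (i # a) (j # b) = 0"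
  obtains i where "i < d" "\<And>a b. a \<in> idx d n \<Longrightarrow> b \<in> idx d n \<Longrightarrow> \<phi> (i # a) (i # b) = 0"
proof (rule ccontr)
  note zero_block = that
  assume "\<not> thesis"
  have "\<exists>a\<in>idx d n. \<exists>b\<in>idx d n. \<phi> (i # a) (i # b) \<noteq> 0" if "i < 3" for i
    using zero_block[of i] that \<open>\<not> thesis\<close> assms(1) by fastforce
  then have "\<forall>i<3. \<exists>a\<in>idx d n. \<exists>b\<in>idx d n. \<phi> (i # a) (i # b) \<noteq> 0"
    by blast
  then obtain a b where ab: "\<And>i. i < 3 \<Longrightarrow> a i \<in> idx d n \<and> b i \<in> idx d n \<and> \<phi> (i # a i) (i # b i) \<noteq> 0"
    by metis
  obtain u0 v0 u1 v1 where rep: "\<forall>a\<in>idx d (Suc n). \<forall>b\<in>idx d (Suc n). \<phi> a b = u0 a * v0 b + u1 a * v1 b"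
    using assms(2) by (auto simp: rank_le2_def)
  have "\<phi> (i # a i) (j # b j) = u0 (i # a i) * v0 (j # b j) + u1 (i # a i) * v1 (j # b j)"
    if "i < 3" "j < 3" for i j
    using rep ab that assms(1) by simp
  moreover have "\<phi> (i # a i) (j # b j) = 0" if "i < 3" "j < 3" "i \<noteq> j" for i j
    using assms(1,3) ab that by simp
  ultimately obtain i where "i < 3" "\<phi> (i # a i) (i # b i) = 0"
    using rank_le2_diagonal_3x3_degenerate[of "\<lambda>i. u0 (i # a i)" "\<lambda>j. v0 (j # b j)"
        "\<lambda>i. u1 (i # a i)" "\<lambda>j. v1 (j # b j)"] by force
  with ab show False
    by blast
qed

lemma schmidt_rank_2_rank_le2:
  assumes "schmidt_rank d n \<psi> = 2"
  shows "rank_le2 (idx d n) (idx d n) \<psi>" and "\<exists>a\<in>idx d n. \<exists>b\<in>idx d n. \<psi> a b \<noteq> 0"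
proof -
  define P where "P r \<longleftrightarrow> (\<exists>u v :: nat \<Rightarrow> nat list \<Rightarrow> complex.
      \<forall>a\<in>idx d n. \<forall>b\<in>idx d n. \<psi> a b = (\<Sum>k<r. u k a * v k b))" for r
  have least: "schmidt_rank d n \<psi> = (LEAST r. P r)"
    unfolding schmidt_rank_def P_def ..
  obtain h where h: "bij_betw h {..<card (idx d n)} (idx d n)"
    using ex_bij_betw_nat_finite[OF finite_idx] atLeast0LessThan by metis
  have "\<psi> a b = (\<Sum>k<card (idx d n). (if a = h k then 1 else 0) * \<psi> (h k) b)" if "a \<in> idx d n" for a b
  proof -
    have "(\<Sum>k<card (idx d n). (if a = h k then 1 else 0) * \<psi> (h k) b) =
        (\<Sum>k<card (idx d n). if a = h k then \<psi> (h k) b else 0)"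
      by (intro sum.cong refl) simp
    also have "\<dots> = (\<Sum>x\<in>idx d n. if a = x then \<psi> x b else 0)"
      by (rule sum.reindex_bij_betw[OF h])
    finally show ?thesis
      using that finite_idx by simp
  qed
  then have "P (card (idx d n))"
    unfolding P_def by (intro exI[of _ "\<lambda>k a. if a = h k then 1 else 0"] exI[of _ "\<lambda>k. \<psi> (h k)"]) blast
  then have "P 2"
    using LeastI[of P] assms least by metis
  then show "rank_le2 (idx d n) (idx d n) \<psi>"
    unfolding P_def rank_le2_def by (auto simp: numeral_2_eq_2)
  show "\<exists>a\<in>idx d n. \<exists>b\<in>idx d n. \<psi> a b \<noteq> 0"
  proof (rule ccontr)
    assume "\<not> ?thesis"
    then have "P 0"
      unfolding P_def by auto
    then show False
      using Least_le[of P 0] assms least by simp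
  qed
qed

definition inner_on :: "'a set \<Rightarrow> ('a \<Rightarrow> complex) \<Rightarrow> ('a \<Rightarrow> complex) \<Rightarrow> complex" where
  "inner_on A f g = (\<Sum>a\<in>A. cnj (f a) * g a)"

definition sqnorm_on :: "'a set \<Rightarrow> ('a \<Rightarrow> complex) \<Rightarrow> real" where
  "sqnorm_on A f = (\<Sum>a\<in>A. (cmod (f a))\<^sup>2)"

(* Division by zero makes the normalisation of a vector vanishing on A vanish as well. *)
definition normalize_on :: "'a set \<Rightarrow> ('a \<Rightarrow> complex) \<Rightarrow> 'a \<Rightarrow> complex" where
  "normalize_on A f a = f a / complex_of_real (sqrt (sqnorm_on A f))"

lemma inner_on_self: "inner_on A f f = complex_of_real (sqnorm_on A f)"
  unfolding inner_on_def sqnorm_on_def of_real_sum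
  by (intro sum.cong refl) (simp only: complex_norm_square mult.commute)

lemma sqnorm_on_nonneg: "sqnorm_on A f \<ge> 0"
  unfolding sqnorm_on_def by (intro sum_nonneg) simp

lemma inner_on_commute: "inner_on A g f = cnj (inner_on A f g)"
  unfolding inner_on_def by (simp add: mult.commute)

lemma inner_on_add_scaled:
  "inner_on A f (\<lambda>a. x * g a + y * h a) = x * inner_on A f g + y * inner_on A f h"
  unfolding inner_on_def by (simp add: sum.distrib sum_distrib_left algebra_simps)

lemma inner_on_diff_scaled:
  "inner_on A f (\<lambda>a. g a - x * h a) = inner_on A f g - x * inner_on A f h"
  unfolding inner_on_def by (simp add: sum_subtractf sum_distrib_left algebra_simps)

lemma inner_on_cong: "(\<And>a. a \<in> A \<Longrightarrow> g a = h a) \<Longrightarrow> inner_on A f g = inner_on A f h"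
  unfolding inner_on_def by (intro sum.cong) auto

lemma sqnorm_on_cong: "(\<And>a. a \<in> A \<Longrightarrow> f a = g a) \<Longrightarrow> sqnorm_on A f = sqnorm_on A g"
  unfolding sqnorm_on_def by (intro sum.cong) auto

lemma sqnorm_on_eq_0_iff: "finite A \<Longrightarrow> sqnorm_on A f = 0 \<longleftrightarrow> (\<forall>a\<in>A. f a = 0)"
  unfolding sqnorm_on_def by (simp add: sum_nonneg_eq_0_iff)

lemma norm_le_sqrt_sqnorm_on:
  assumes "finite A" "a \<in> A"
  shows "cmod (f a) \<le> sqrt (sqnorm_on A f)"
proof -
  have "(cmod (f a))\<^sup>2 \<le> sqnorm_on A f"
    unfolding sqnorm_on_def using assms by (intro member_le_sum) auto
  then show ?thesis
    by (simp add: real_le_rsqrt)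
qed

lemma norm_le_1_if_sqnorm_on_eq_1:
  assumes "finite A" "sqnorm_on (A \<times> A) (\<lambda>(a, b). \<phi> a b) = 1" "a \<in> A" "b \<in> A"
  shows "cmod (\<phi> a b) \<le> 1"
  using norm_le_sqrt_sqnorm_on[of "A \<times> A" "(a, b)" "\<lambda>(a, b). \<phi> a b"] assms by simp

lemma norm_normalize_on_le_1:
  assumes "finite A" "a \<in> A"
  shows "cmod (normalize_on A f a) \<le> 1"
  using norm_le_sqrt_sqnorm_on[OF assms, of f]
  by (cases "sqrt (sqnorm_on A f) = 0") (simp_all add: normalize_on_def norm_divide)

lemma normalize_on_expand:
  assumes "finite A" "a \<in> A"
  shows "f a = inner_on A (normalize_on A f) f * normalize_on A f a"
proof (cases "sqrt (sqnorm_on A f) = 0")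
  case True
  then show ?thesis
    using norm_le_sqrt_sqnorm_on[OF assms, of f] by (simp add: normalize_on_def)
next
  case False
  let ?s = "sqrt (sqnorm_on A f)"
  have "inner_on A (normalize_on A f) f = inner_on A f f / complex_of_real ?s"
    unfolding inner_on_def normalize_on_def by (simp add: sum_divide_distrib)
  also have "\<dots> = complex_of_real ?s"
    unfolding inner_on_self using False sqnorm_on_nonneg[of A f]
    by (simp add: field_simps flip: of_real_mult)
  finally show ?thesis
    using False by (simp add: normalize_on_def)
qed

lemma norm_inner_on_le_card:
  assumes "\<And>a. a \<in> A \<Longrightarrow> cmod (f a) \<le> 1" "\<And>a. a \<in> A \<Longrightarrow> cmod (g a) \<le> 1"
  shows "cmod (inner_on A f g) \<le> real (card A)"
proof -
  have "cmod (inner_on A f g) \<le> (\<Sum>a\<in>A. 1)"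
    unfolding inner_on_def norm_mult complex_mod_cnj
    by (intro sum_norm_le) (simp add: norm_mult mult_le_one assms)
  then show ?thesis
    by simp
qed

lemma normalize_on_idem:
  "inner_on A (normalize_on A f) (normalize_on A f) * normalize_on A f a = normalize_on A f a"
proof (cases "sqnorm_on A f = 0")
  case False
  have "sqnorm_on A (normalize_on A f) = sqnorm_on A f / (sqrt (sqnorm_on A f))\<^sup>2"
    unfolding sqnorm_on_def normalize_on_def
    by (simp add: norm_divide power_divide sum_divide_distrib)
  then have "sqnorm_on A (normalize_on A f) = 1"
    using False sqnorm_on_nonneg[of A f] by simp
  then show ?thesis
    by (simp add: inner_on_self)
qed (simp add: normalize_on_def)

lemma inner_on_idem_mult:
  assumes "\<And>a. a \<in> A \<Longrightarrow> inner_on A e e * e a = e a"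
  shows "inner_on A e e * inner_on A e g = inner_on A e g"
proof -
  have "inner_on A e g = inner_on A (\<lambda>a. inner_on A e e * e a) g"
    unfolding inner_on_def[of A e g] inner_on_def[of A "\<lambda>a. inner_on A e e * e a" g]
    by (intro sum.cong refl) (simp only: assms)
  also have "\<dots> = inner_on A e e * inner_on A e g"
    unfolding inner_on_def inner_on_self by (simp add: sum_distrib_left mult_ac)
  finally show ?thesis ..
qed

lemma inner_on_pair_expand:
  assumes e0: "\<And>a. a \<in> A \<Longrightarrow> inner_on A e0 e0 * e0 a = e0 a"
    and e1: "\<And>a. a \<in> A \<Longrightarrow> inner_on A e1 e1 * e1 a = e1 a"
    and orth: "inner_on A e0 e1 = 0"
    and f: "\<And>a. a \<in> A \<Longrightarrow> f a = x * e0 a + y * e1 a" and "a \<in> A"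
  shows "f a = inner_on A e0 f * e0 a + inner_on A e1 f * e1 a"
proof -
  have "inner_on A e0 f = x * inner_on A e0 e0" "inner_on A e1 f = y * inner_on A e1 e1"
    using orth inner_on_commute[of A e1 e0]
    by (simp_all add: inner_on_cong[OF f] inner_on_add_scaled)
  then show ?thesis
    unfolding f[OF \<open>a \<in> A\<close>] by (simp only: mult.assoc e0[OF \<open>a \<in> A\<close>] e1[OF \<open>a \<in> A\<close>])
qed

lemma rank_le2_bounded_decomp:
  assumes "finite A" "rank_le2 A B \<phi>" "\<And>a b. a \<in> A \<Longrightarrow> b \<in> B \<Longrightarrow> cmod (\<phi> a b) \<le> 1"
  obtains e0 e1 w0 w1 where
    "\<And>a. a \<in> A \<Longrightarrow> cmod (e0 a) \<le> 1 \<and> cmod (e1 a) \<le> 1"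
    "\<And>b. b \<in> B \<Longrightarrow> cmod (w0 b) \<le> real (card A) \<and> cmod (w1 b) \<le> real (card A)"
    "\<And>a b. a \<in> A \<Longrightarrow> b \<in> B \<Longrightarrow> \<phi> a b = e0 a * w0 b + e1 a * w1 b"
proof -
  obtain u0 v0 u1 v1 where rep: "\<And>a b. a \<in> A \<Longrightarrow> b \<in> B \<Longrightarrow> \<phi> a b = u0 a * v0 b + u1 a * v1 b"
    using assms(2) by (auto simp: rank_le2_def)
  define e0 where "e0 = normalize_on A u0"
  define r where "r a = u1 a - inner_on A e0 u1 * e0 a" for a
  define e1 where "e1 = normalize_on A r"
  have idem: "\<And>a. inner_on A e0 e0 * e0 a = e0 a" "\<And>a. inner_on A e1 e1 * e1 a = e1 a"
    unfolding e0_def e1_def by (rule normalize_on_idem)+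
  have "inner_on A e0 r = inner_on A e0 u1 - inner_on A e0 u1 * inner_on A e0 e0"
    unfolding r_def by (rule inner_on_diff_scaled)
  then have "inner_on A e0 r = 0"
    using inner_on_idem_mult[OF idem(1)] by (simp add: mult.commute)
  then have orth: "inner_on A e0 e1 = 0"
    unfolding e1_def normalize_on_def inner_on_def by (simp add: sum_divide_distrib[symmetric])
  have span: "\<phi> a b = (inner_on A e0 u0 * v0 b + inner_on A e0 u1 * v1 b) * e0 a
      + (inner_on A e1 r * v1 b) * e1 a" if "a \<in> A" "b \<in> B" for a b
  proof -
    have "u0 a = inner_on A e0 u0 * e0 a" "r a = inner_on A e1 r * e1 a"
      unfolding e0_def e1_def using normalize_on_expand[OF assms(1) that(1)] by blast+
    then show ?thesis
      using rep[OF that] unfolding r_def by (simp add: algebra_simps)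
  qed
  define w0 where "w0 b = inner_on A e0 (\<lambda>a. \<phi> a b)" for b
  define w1 where "w1 b = inner_on A e1 (\<lambda>a. \<phi> a b)" for b
  show ?thesis
  proof
    show e_le: "cmod (e0 a) \<le> 1 \<and> cmod (e1 a) \<le> 1" if "a \<in> A" for a
      unfolding e0_def e1_def using norm_normalize_on_le_1[OF assms(1) that] by blast
    show "cmod (w0 b) \<le> real (card A) \<and> cmod (w1 b) \<le> real (card A)" if "b \<in> B" for b
      unfolding w0_def w1_def using e_le assms(3) that by (simp add: norm_inner_on_le_card)
    show "\<phi> a b = e0 a * w0 b + e1 a * w1 b" if "a \<in> A" "b \<in> B" for a b
      using inner_on_pair_expand[OF idem orth span[OF _ that(2)] that(1)]
      unfolding w0_def w1_def by (simp add: mult.commute)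
  qed
qed

lemma rank_le2_normalize:
  assumes "finite A" "rank_le2 A A \<psi>" "a \<in> A" "b \<in> A" "\<psi> a b \<noteq> 0"
  obtains s \<phi> where "rank_le2 A A \<phi>" "sqnorm_on (A \<times> A) (\<lambda>(a, b). \<phi> a b) = 1"
    "\<psi> = (\<lambda>a b. complex_of_real s * \<phi> a b)"
proof -
  define s where "s = sqrt (sqnorm_on (A \<times> A) (\<lambda>(a, b). \<psi> a b))"
  have "sqnorm_on (A \<times> A) (\<lambda>(a, b). \<psi> a b) \<noteq> 0"
    using assms by (auto simp: sqnorm_on_eq_0_iff)
  then have "s > 0"
    unfolding s_def using sqnorm_on_nonneg[of "A \<times> A" "\<lambda>(a, b). \<psi> a b"] by simp
  define \<phi> where "\<phi> a b = complex_of_real (1 / s) * \<psi> a b" for a b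
  have "sqnorm_on (A \<times> A) (\<lambda>(a, b). \<phi> a b) = sqnorm_on (A \<times> A) (\<lambda>(a, b). \<psi> a b) / s\<^sup>2"
    unfolding sqnorm_on_def \<phi>_def using \<open>s > 0\<close>
    by (simp add: norm_mult norm_divide power_divide sum_divide_distrib split_def)
  also have "\<dots> = 1"
    using \<open>s > 0\<close> sqnorm_on_nonneg unfolding s_def by simp
  finally have "sqnorm_on (A \<times> A) (\<lambda>(a, b). \<phi> a b) = 1" .
  moreover have "\<psi> = (\<lambda>a b. complex_of_real s * \<phi> a b)"
    using \<open>s > 0\<close> by (simp add: \<phi>_def flip: of_real_mult)
  ultimately show ?thesis
    using that rank_le2_scale[OF assms(2)] unfolding \<phi>_def by blast
qed

definition rank2_vec :: "(nat \<times> nat list \<Rightarrow> complex) \<Rightarrow> nat list \<Rightarrow> nat list \<Rightarrow> complex" where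
  "rank2_vec p a b = p (0, a) * p (2, b) + p (1, a) * p (3, b)"

lemma rank_le2_rank2_vec: "rank_le2 A B (rank2_vec p)"
  unfolding rank_le2_def rank2_vec_def
  by (intro exI[of _ "\<lambda>a. p (0, a)"] exI[of _ "\<lambda>b. p (2, b)"] exI[of _ "\<lambda>a. p (1, a)"]
      exI[of _ "\<lambda>b. p (3, b)"] ballI refl)

lemma compact_norm_bounded_functions: "compact {p :: 'a \<Rightarrow> complex. \<forall>z. cmod (p z) \<le> R}"
proof -
  have "{p :: 'a \<Rightarrow> complex. \<forall>z. cmod (p z) \<le> R} = PiE UNIV (\<lambda>_. cball 0 R)"
    by (auto simp: PiE_def Pi_def extensional_def)
  moreover have "compactin (product_topology (\<lambda>_. euclidean) UNIV) (PiE UNIV (\<lambda>_. cball (0::complex) R))"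
    by (subst compactin_PiE) auto
  ultimately show ?thesis
    by (simp add: euclidean_product_topology)
qed

lemma continuous_on_coordinate [continuous_intros]:
  "continuous_on S (\<lambda>p :: 'a \<Rightarrow> 'b::topological_space. p z)"
  by (rule continuous_on_subset[OF continuous_on_product_coordinates]) simp

definition rank2_params :: "nat list set \<Rightarrow> (nat \<times> nat list \<Rightarrow> complex) set" where
  "rank2_params A = {p. \<forall>z. cmod (p z) \<le> real (card A)} \<inter>
    {p. sqnorm_on (A \<times> A) (\<lambda>(a, b). rank2_vec p a b) = 1}"

lemma compact_rank2_params: "compact (rank2_params A)"
proof -
  have "continuous_on UNIV (\<lambda>p. sqnorm_on (A \<times> A) (\<lambda>(a, b). rank2_vec p a b))"
    unfolding sqnorm_on_def rank2_vec_def split_def by (intro continuous_intros)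
  then show ?thesis
    unfolding rank2_params_def
    by (intro compact_Int_closed compact_norm_bounded_functions closed_Collect_eq) simp_all
qed

lemma rank_le2_unit_eq_rank2_vec:
  assumes "finite A" "rank_le2 A A \<phi>" "sqnorm_on (A \<times> A) (\<lambda>(a, b). \<phi> a b) = 1"
  obtains p where "p \<in> rank2_params A" "\<And>a b. a \<in> A \<Longrightarrow> b \<in> A \<Longrightarrow> \<phi> a b = rank2_vec p a b"
proof -
  obtain e0 e1 w0 w1 where e: "\<And>a. a \<in> A \<Longrightarrow> cmod (e0 a) \<le> 1 \<and> cmod (e1 a) \<le> 1"
    and w: "\<And>b. b \<in> A \<Longrightarrow> cmod (w0 b) \<le> real (card A) \<and> cmod (w1 b) \<le> real (card A)"
    and rep: "\<And>a b. a \<in> A \<Longrightarrow> b \<in> A \<Longrightarrow> \<phi> a b = e0 a * w0 b + e1 a * w1 b"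
    using rank_le2_bounded_decomp[OF assms(1,2) norm_le_1_if_sqnorm_on_eq_1[OF assms(1,3)]] by metis
  define p where "p = (\<lambda>(k, a). if a \<notin> A then 0 else if k = 0 then e0 a else if k = 1 then e1 a
    else if k = (2::nat) then w0 a else if k = 3 then w1 a else 0)"
  have \<phi>_eq: "\<phi> a b = rank2_vec p a b" if "a \<in> A" "b \<in> A" for a b
    using rep[OF that] that by (simp add: rank2_vec_def p_def)
  have "cmod (p (k, a)) \<le> real (card A)" for k a
  proof (cases "a \<in> A")
    case True
    then have "1 \<le> real (card A)"
      using assms(1) card_0_eq by fastforce
    then have "cmod (e0 a) \<le> real (card A)" "cmod (e1 a) \<le> real (card A)"
      using e[OF True] by linarith+
    then show ?thesis
      using True w[OF True] unfolding p_def by auto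
  qed (simp add: p_def)
  moreover have "sqnorm_on (A \<times> A) (\<lambda>(a, b). rank2_vec p a b) = sqnorm_on (A \<times> A) (\<lambda>(a, b). \<phi> a b)"
    by (rule sqnorm_on_cong) (auto simp: \<phi>_eq)
  ultimately have "p \<in> rank2_params A"
    using assms(3) by (auto simp: rank2_params_def)
  with \<phi>_eq show ?thesis
    using that by blast
qed

lemma rank_le2_unit_uniform_lower_bound:
  assumes pos: "\<And>\<phi> a b. rank_le2 (idx d n) (idx d n) \<phi> \<Longrightarrow> a \<in> idx d n \<Longrightarrow> b \<in> idx d n \<Longrightarrow>
    \<phi> a b \<noteq> 0 \<Longrightarrow> Re (expval d n M \<phi>) > 0"
  obtains m where "m > 0" "\<And>\<phi>. rank_le2 (idx d n) (idx d n) \<phi> \<Longrightarrow>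
    sqnorm_on (idx d n \<times> idx d n) (\<lambda>(a, b). \<phi> a b) = 1 \<Longrightarrow> m \<le> Re (expval d n M \<phi>)"
proof -
  let ?I = "idx d n" and ?K = "rank2_params (idx d n)"
  define F where "F p = Re (expval d n M (rank2_vec p))" for p
  have "continuous_on ?K F"
    unfolding F_def expval_def rank2_vec_def by (intro continuous_intros)
  have F_pos: "F p > 0" if "p \<in> ?K" for p
  proof -
    have "sqnorm_on (?I \<times> ?I) (\<lambda>(a, b). rank2_vec p a b) \<noteq> 0"
      using that by (simp add: rank2_params_def)
    then obtain a b where "a \<in> ?I" "b \<in> ?I" "rank2_vec p a b \<noteq> 0"
      by (auto simp: sqnorm_on_eq_0_iff finite_idx)
    then show ?thesis
      unfolding F_def by (intro pos rank_le2_rank2_vec)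
  qed
  have in_K: "\<exists>p\<in>?K. Re (expval d n M \<phi>) = F p"
    if "rank_le2 ?I ?I \<phi>" "sqnorm_on (?I \<times> ?I) (\<lambda>(a, b). \<phi> a b) = 1" for \<phi>
    using rank_le2_unit_eq_rank2_vec[OF finite_idx that] expval_cong[of d n \<phi> _ M]
    unfolding F_def by metis
  show ?thesis
  proof (cases "?K = {}")
    case True
    then show ?thesis
      using that[of 1] in_K by (metis empty_iff zero_less_one)
  next
    case False
    then obtain p0 where "p0 \<in> ?K" "\<And>p. p \<in> ?K \<Longrightarrow> F p0 \<le> F p"
      using continuous_attains_inf[OF compact_rank2_params _ \<open>continuous_on ?K F\<close>] by blast
    then show ?thesis
      using that[of "F p0"] F_pos in_K by metis
  qed
qed

section \<open>The partially transposed state\<close>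

definition diag_coef :: "nat \<Rightarrow> real \<Rightarrow> real \<Rightarrow> real" where
  "diag_coef d c e = 1 / (2 * real d) - (real d - 1) / 2 * (c + e)"

definition off_coef :: "nat \<Rightarrow> real \<Rightarrow> real \<Rightarrow> real" where
  "off_coef d c e = (1 / (real d * (real d - 1)) + e + c) / 2"

definition swap_coef :: "nat \<Rightarrow> real \<Rightarrow> real \<Rightarrow> real" where
  "swap_coef d c e = (c - (1 / (real d * (real d - 1)) + e)) / 2"

(* Partial transposition turns the coherences |ij><ji| of the psi^+- terms into |ii><jj|. *)
definition rho_pt :: "nat \<Rightarrow> real \<Rightarrow> real \<Rightarrow> nat \<times> nat \<Rightarrow> nat \<times> nat \<Rightarrow> real" where
  "rho_pt d c e = (\<lambda>(i1, j1) (i2, j2).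
     if i1 < d \<and> j1 < d \<and> i2 < d \<and> j2 < d then
       if i1 = j1 \<and> i2 = j2 \<and> i1 = i2 then diag_coef d c e
       else if i1 = i2 \<and> j1 = j2 then off_coef d c e
       else if i1 = j1 \<and> i2 = j2 then swap_coef d c e else 0
     else 0)"

lemma sum_outer_ket2_diag:
  "(\<Sum>i<d. outer (ket2 i i) (p, q) (r, s)) = (if p = q \<and> r = s \<and> p = r \<and> p < d then 1 else 0)"
proof -
  have "outer (ket2 i i) (p, q) (r, s) = (if i = p then (if p = q \<and> r = s \<and> p = r then 1 else 0) else 0)" for i
    by (auto simp: outer_def ket2_def)
  then show ?thesis by (simp add: sum.delta')
qed

lemma sum_upper_pairs_supported:
  fixes f :: "nat \<Rightarrow> nat \<Rightarrow> 'a::comm_monoid_add"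
  assumes "\<And>i j. i < j \<Longrightarrow> (i, j) \<noteq> (p, q) \<Longrightarrow> (i, j) \<noteq> (q, p) \<Longrightarrow> f i j = 0"
  shows "(\<Sum>i<d. \<Sum>j\<in>{i<..<d}. f i j) =
    (if p < q \<and> q < d then f p q else if q < p \<and> p < d then f q p else 0)"
proof -
  have "(\<Sum>i<d. \<Sum>j\<in>{i<..<d}. f i j) = (\<Sum>(i, j)\<in>Sigma {..<d} (\<lambda>i. {i<..<d}). f i j)"
    by (simp add: sum.Sigma)
  also have "\<dots> = (\<Sum>(i, j)\<in>Sigma {..<d} (\<lambda>i. {i<..<d}) \<inter> {(p, q), (q, p)}. f i j)"
    using assms by (intro sum.mono_neutral_right) (auto, metis+)
  also have "Sigma {..<d} (\<lambda>i. {i<..<d}) \<inter> {(p, q), (q, p)} =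
      (if p < q \<and> q < d then {(p, q)} else if q < p \<and> p < d then {(q, p)} else {})"
    by auto
  finally show ?thesis
    by simp
qed

lemma outer_psi_pm_eq_0:
  "i < j \<Longrightarrow> (i, j) \<noteq> (p, q) \<Longrightarrow> (i, j) \<noteq> (q, p) \<Longrightarrow> outer (psi_pm \<sigma> i j) (p, q) (r, s) = 0"
  unfolding outer_def psi_pm_def ket2_def by auto

lemma outer_psi_pm_at:
  assumes "p \<noteq> q" "cnj \<sigma> = \<sigma>" "\<sigma> * \<sigma> = 1"
  shows "outer (psi_pm \<sigma> p q) (p, q) (r, s) =
           ((if r = p \<and> s = q then 1 else 0) + (if r = q \<and> s = p then \<sigma> else 0)) / 2"
    and "outer (psi_pm \<sigma> q p) (p, q) (r, s) =
           ((if r = p \<and> s = q then 1 else 0) + (if r = q \<and> s = p then \<sigma> else 0)) / 2"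
proof -
  have sqrt2: "complex_of_real (sqrt 2) * complex_of_real (sqrt 2) = 2"
    by (simp flip: of_real_mult)
  show "outer (psi_pm \<sigma> p q) (p, q) (r, s) =
           ((if r = p \<and> s = q then 1 else 0) + (if r = q \<and> s = p then \<sigma> else 0)) / 2"
    using assms unfolding outer_def psi_pm_def ket2_def
    by (simp add: sqrt2 complex_cnj_divide)
  show "outer (psi_pm \<sigma> q p) (p, q) (r, s) =
           ((if r = p \<and> s = q then 1 else 0) + (if r = q \<and> s = p then \<sigma> else 0)) / 2"
    using assms unfolding outer_def psi_pm_def ket2_def
    by (simp add: sqrt2 complex_cnj_divide algebra_simps)
qed

lemma sum_outer_psi_pm:
  assumes "cnj \<sigma> = \<sigma>" "\<sigma> * \<sigma> = 1"
  shows "(\<Sum>i<d. \<Sum>j\<in>{i<..<d}. outer (psi_pm \<sigma> i j) (p, q) (r, s)) =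
    (if p < d \<and> q < d \<and> p \<noteq> q then ((if r = p \<and> s = q then 1 else 0) + (if r = q \<and> s = p then \<sigma> else 0)) / 2 else 0)"
proof -
  have "(\<Sum>i<d. \<Sum>j\<in>{i<..<d}. outer (psi_pm \<sigma> i j) (p, q) (r, s)) =
    (if p < q \<and> q < d then outer (psi_pm \<sigma> p q) (p, q) (r, s)
     else if q < p \<and> p < d then outer (psi_pm \<sigma> q p) (p, q) (r, s) else 0)"
    by (rule sum_upper_pairs_supported) (rule outer_psi_pm_eq_0)
  then show ?thesis
    using outer_psi_pm_at[OF _ assms, of p q r s]
    by (cases "p < q"; cases "q < p") simp_all
qed

lemma ptrans_rho_entry:
  "ptrans (rho d c e) (i1, j1) (i2, j2) =
    complex_of_real (1 / (2 * real d) - (real d - 1) / 2 * (c + e))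
      * (if i1 = j2 \<and> i2 = j1 \<and> i1 = i2 \<and> i1 < d then 1 else 0)
    + complex_of_real (1 / (real d * (real d - 1)) + e)
      * (if i1 < d \<and> j2 < d \<and> i1 \<noteq> j2 then
          ((if i2 = i1 \<and> j1 = j2 then 1 else 0) + (if i2 = j2 \<and> j1 = i1 then -1 else 0)) / 2 else 0)
    + complex_of_real c
      * (if i1 < d \<and> j2 < d \<and> i1 \<noteq> j2 then
          ((if i2 = i1 \<and> j1 = j2 then 1 else 0) + (if i2 = j2 \<and> j1 = i1 then 1 else 0)) / 2 else 0)"
proof -
  have "cnj (-1::complex) = -1" "(-1::complex) * -1 = 1"
    by simp_all
  then show ?thesis
    unfolding ptrans_def rho_def
    by (simp only: case_prod_conv sum_outer_ket2_diag sum_outer_psi_pm sum_outer_psi_pm[of 1, simplified])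
qed

lemma ptrans_rho: "ptrans (rho d c e) x y = complex_of_real (rho_pt d c e x y)"
proof -
  obtain i1 j1 i2 j2 where xy: "x = (i1, j1)" "y = (i2, j2)"
    by (cases x, cases y) auto
  consider (diag) "i1 = j1" "i2 = j2" "i1 = i2"
    | (swap) "i1 = j1" "i2 = j2" "i1 \<noteq> i2"
    | (off) "i1 = i2" "j1 = j2" "i1 \<noteq> j1"
    | (zero) "\<not> (i1 = j1 \<and> i2 = j2)" "\<not> (i1 = i2 \<and> j1 = j2)"
    by blast
  then have "ptrans (rho d c e) (i1, j1) (i2, j2) = complex_of_real (rho_pt d c e (i1, j1) (i2, j2))"
  proof cases
    case diag
    then show ?thesis
      unfolding ptrans_rho_entry rho_pt_def diag_coef_def by simp
  next
    case swap
    then show ?thesis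
      unfolding ptrans_rho_entry rho_pt_def swap_coef_def by (simp add: diff_divide_distrib)
  next
    case off
    then show ?thesis
      unfolding ptrans_rho_entry rho_pt_def off_coef_def by (simp add: add_divide_distrib)
  next
    case zero
    then have n: "\<not> (i1 = j1 \<and> i2 = j2 \<and> i1 = i2)" "\<not> (i1 = j2 \<and> i2 = j1 \<and> i1 = i2 \<and> i1 < d)"
      "\<not> (i2 = i1 \<and> j1 = j2)" "\<not> (i2 = j2 \<and> j1 = i1)"
      by auto
    \<comment> \<open>\<open>simp\<close> loops when these negated conjunctions of equations are premises\<close>
    show ?thesis
      unfolding ptrans_rho_entry rho_pt_def case_prod_conv
      by (simp only: if_not_P[OF n(1)] if_not_P[OF n(2)] if_not_P[OF n(3)] if_not_P[OF n(4)]
          if_not_P[OF zero(1)] if_not_P[OF zero(2)]) simp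
  qed
  then show ?thesis
    unfolding xy .
qed

lemma rho_pt_commute: "rho_pt d c e x y = rho_pt d c e y x"
  by (cases x; cases y) (auto simp: rho_pt_def)

lemma rho_pt_cases:
  obtains "\<And>e. rho_pt d c e x y = diag_coef d c e" | "\<And>e. rho_pt d c e x y = off_coef d c e"
    | "\<And>e. rho_pt d c e x y = swap_coef d c e" | "\<And>e. rho_pt d c e x y = 0"
proof -
  obtain i1 j1 i2 j2 where xy: "x = (i1, j1)" "y = (i2, j2)"
    by (cases x, cases y) auto
  define C0 where "C0 \<longleftrightarrow> i1 < d \<and> j1 < d \<and> i2 < d \<and> j2 < d"
  define C1 where "C1 \<longleftrightarrow> i1 = j1 \<and> i2 = j2 \<and> i1 = i2"
  define C2 where "C2 \<longleftrightarrow> i1 = i2 \<and> j1 = j2"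
  define C3 where "C3 \<longleftrightarrow> i1 = j1 \<and> i2 = j2"
  have "rho_pt d c e x y = (if C0 then if C1 then diag_coef d c e else if C2 then off_coef d c e
      else if C3 then swap_coef d c e else 0 else 0)" for e
    unfolding xy rho_pt_def C0_def C1_def C2_def C3_def by simp
  then show ?thesis
    using that by (cases C0; cases C1; cases C2; cases C3) simp_all
qed

lemma abs_rho_pt_le_1:
  assumes "d \<ge> 2" "0 \<le> c" "0 \<le> e" "c + e \<le> 1 / (real d * (real d - 1))"
  shows "\<bar>rho_pt d c e x y\<bar> \<le> 1"
proof -
  define L where "L = 1 / (real d * (real d - 1))"
  have "2 * 1 \<le> real d * (real d - 1)"
    using assms(1) by (intro mult_mono) auto
  then have L: "L \<le> 1 / 2" "(real d - 1) * L = 1 / real d" "1 / real d \<le> 1"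
    using assms(1) by (auto simp: L_def field_simps)
  have ce: "c + e \<le> L"
    using assms(4) by (simp add: L_def)
  then have "(real d - 1) * (c + e) \<le> (real d - 1) * L"
    using assms by (intro mult_left_mono) auto
  then have "0 \<le> (real d - 1) * (c + e)" "(real d - 1) * (c + e) \<le> 1 / real d"
    using assms L(2) by auto
  moreover have "diag_coef d c e = (1 / real d - (real d - 1) * (c + e)) / 2"
    by (simp add: diag_coef_def field_simps)
  ultimately have "\<bar>diag_coef d c e\<bar> \<le> 1"
    using L by (simp add: abs_le_iff)
  moreover have "\<bar>off_coef d c e\<bar> \<le> 1" "\<bar>swap_coef d c e\<bar> \<le> 1"
    unfolding off_coef_def swap_coef_def L_def[symmetric] using assms(2,3) L(1) ce by auto
  ultimately show ?thesis
    by (cases rule: rho_pt_cases[of d c x y]) simp_all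
qed

lemma abs_rho_pt_diff_le:
  assumes "0 \<le> e"
  shows "\<bar>rho_pt d c e x y - rho_pt d c 0 x y\<bar> \<le> real d * e"
proof (cases "d = 0")
  case False
  have "(real d - 1) / 2 * e \<le> real d * e" "1 / 2 * e \<le> real d * e"
    by (rule mult_right_mono; use False assms in simp)+
  moreover have "diag_coef d c e - diag_coef d c 0 = - ((real d - 1) / 2 * e)"
    "off_coef d c e - off_coef d c 0 = 1 / 2 * e" "swap_coef d c e - swap_coef d c 0 = - (1 / 2 * e)"
    by (simp_all add: diag_coef_def off_coef_def swap_coef_def field_simps)
  ultimately show ?thesis
    using False assms by (cases rule: rho_pt_cases[of d c x y]) simp_all
qed (cases x; cases y; simp add: rho_pt_def)

lemma Im_expval_rho: "Im (expval d n (ptrans (rho d c e)) \<phi>) = 0"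
  using expval_hermitian_real[of "ptrans (rho d c e)"] by (simp add: ptrans_rho rho_pt_commute complex_is_Real_iff)

lemma Re_expval_rho_ge:
  assumes "d \<ge> 2" "0 \<le> c" "0 \<le> e" "c + e \<le> 1 / (real d * (real d - 1))"
    and "sqnorm_on (idx d n \<times> idx d n) (\<lambda>(a, b). \<phi> a b) = 1"
  shows "Re (expval d n (ptrans (rho d c 0)) \<phi>) - real (d ^ n) ^ 4 * (real n * (real d * e))
    \<le> Re (expval d n (ptrans (rho d c e)) \<phi>)"
proof -
  let ?E = "\<lambda>e. expval d n (ptrans (rho d c e)) \<phi>"
  have "cmod (?E e - ?E 0) \<le> real (card (idx d n)) ^ 4 * (real n * (real d * e))"
  proof (rule norm_expval_diff_le)
    show "cmod (ptrans (rho d c e) x y) \<le> 1" "cmod (ptrans (rho d c 0) x y) \<le> 1" for x y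
      using abs_rho_pt_le_1[of d c e x y] abs_rho_pt_le_1[of d c 0 x y] assms
      by (simp_all add: ptrans_rho)
    show "cmod (ptrans (rho d c e) x y - ptrans (rho d c 0) x y) \<le> real d * e" for x y
      using abs_rho_pt_diff_le[OF assms(3)] by (simp add: ptrans_rho flip: of_real_diff)
  qed (rule norm_le_1_if_sqnorm_on_eq_1[OF finite_idx assms(5)])
  then show ?thesis
    using abs_Re_le_cmod[of "?E e - ?E 0"] by (simp add: card_idx)
qed

section \<open>Positivity at the unperturbed point\<close>

(* At eps = 0 the off-diagonal part of rho^PT is off_coef times the identity and the diagonal
   block is -d swap_coef times the projection onto the complement of sum_i |ii>. *)
definition gram_vec :: "nat \<Rightarrow> real \<Rightarrow> nat \<times> nat \<Rightarrow> nat \<times> nat \<Rightarrow> real" where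
  "gram_vec d c = (\<lambda>(i, j) (p, q).
     if i \<noteq> j then (if p = i \<and> q = j then sqrt (off_coef d c 0) else 0)
     else if p = q \<and> p < d then sqrt (- real d * swap_coef d c 0) * ((if p = i then 1 else 0) - 1 / real d)
     else 0)"

lemma sum_centered_deltas:
  assumes "p < d" "q < d"
  shows "(\<Sum>i<d. ((if p = i then 1 else 0) - 1 / real d) * ((if q = i then 1 else 0) - 1 / real d))
    = (if p = q then 1 else 0) - 1 / real d"
proof -
  have "(\<Sum>i<d. ((if p = i then 1 else 0) - 1 / real d) * ((if q = i then 1 else 0) - 1 / real d))
    = (\<Sum>i<d. (if p = i then (if q = i then 1 else 0) else 0) - (if p = i then 1 / real d else 0)
        - (if q = i then 1 / real d else 0) + 1 / (real d * real d))"
    by (intro sum.cong refl) (auto simp: field_simps)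
  also have "\<dots> = (if p = q then 1 else 0) - 1 / real d - 1 / real d + real d * (1 / (real d * real d))"
    using assms by (simp add: sum.distrib sum_subtractf)
  also have "\<dots> = (if p = q then 1 else 0) - 1 / real d"
    using assms by (simp add: field_simps)
  finally show ?thesis .
qed

lemma sum_pairs_diagonal:
  fixes f :: "nat \<times> nat \<Rightarrow> 'a::comm_monoid_add"
  assumes "\<And>i j. i \<noteq> j \<Longrightarrow> f (i, j) = 0"
  shows "(\<Sum>r\<in>{..<d} \<times> {..<d}. f r) = (\<Sum>i<d. f (i, i))"
proof -
  have "(\<Sum>r\<in>{..<d} \<times> {..<d}. f r) = (\<Sum>i<d. \<Sum>j<d. if j = i then f (i, i) else 0)"
    unfolding sum.cartesian_product' using assms by (intro sum.cong refl) auto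
  then show ?thesis
    by simp
qed

lemma sum_gram_vec_products_off_diag:
  assumes "p \<noteq> q" "0 \<le> c"
  shows "(\<Sum>r\<in>{..<d} \<times> {..<d}. gram_vec d c r (p, q) * gram_vec d c r y) = rho_pt d c 0 (p, q) y"
proof -
  have "0 \<le> 1 / (real d * (real d - 1))"
    by (cases d) simp_all
  then have "off_coef d c 0 \<ge> 0"
    using assms(2) by (simp add: off_coef_def)
  have "gram_vec d c r (p, q) = (if r = (p, q) then sqrt (off_coef d c 0) else 0)" for r
    using assms(1) by (cases r) (auto simp: gram_vec_def)
  then have "(\<Sum>r\<in>{..<d} \<times> {..<d}. gram_vec d c r (p, q) * gram_vec d c r y) =
    (\<Sum>r\<in>{..<d} \<times> {..<d}. if r = (p, q) then sqrt (off_coef d c 0) * gram_vec d c (p, q) y else 0)"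
    by (intro sum.cong refl) simp
  also have "\<dots> = (if p < d \<and> q < d then sqrt (off_coef d c 0) * gram_vec d c (p, q) y else 0)"
    by (simp add: sum.delta)
  also have "\<dots> = rho_pt d c 0 (p, q) y"
    using assms(1) \<open>off_coef d c 0 \<ge> 0\<close> by (cases y) (auto simp: gram_vec_def rho_pt_def)
  finally show ?thesis .
qed

lemma sum_gram_vec_products_diag:
  assumes "d \<ge> 2" "c \<le> 1 / (real d * (real d - 1))"
  shows "(\<Sum>r\<in>{..<d} \<times> {..<d}. gram_vec d c r (p, p) * gram_vec d c r y) = rho_pt d c 0 (p, p) y"
proof -
  obtain p' q' where y: "y = (p', q')"
    by (cases y)
  define lam where "lam = - real d * swap_coef d c 0"
  have "lam \<ge> 0"
    using assms by (simp add: lam_def swap_coef_def mult_nonneg_nonpos)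
  have "(\<Sum>r\<in>{..<d} \<times> {..<d}. gram_vec d c r (p, p) * gram_vec d c r y) =
    (\<Sum>i<d. gram_vec d c (i, i) (p, p) * gram_vec d c (i, i) y)"
    by (intro sum_pairs_diagonal) (simp add: gram_vec_def)
  also have "\<dots> = rho_pt d c 0 (p, p) y"
  proof (cases "p' = q' \<and> p < d \<and> p' < d")
    case True
    then have y: "y = (p', p')" and "p < d" "p' < d"
      using y by auto
    have gv: "gram_vec d c (i, i) (k, k) = sqrt lam * ((if k = i then 1 else 0) - 1 / real d)"
      if "k < d" for i k
      using that unfolding lam_def by (simp add: gram_vec_def)
    have sq: "sqrt lam * a * (sqrt lam * b) = lam * (a * b)" for a b
      using \<open>lam \<ge> 0\<close> real_sqrt_mult_self[of lam] by (simp only: mult_ac)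
    have "(\<Sum>i<d. gram_vec d c (i, i) (p, p) * gram_vec d c (i, i) y) = lam * (\<Sum>i<d.
        ((if p = i then 1 else 0) - 1 / real d) * ((if p' = i then 1 else 0) - 1 / real d))"
      unfolding y sum_distrib_left using \<open>p < d\<close> \<open>p' < d\<close>
      by (intro sum.cong refl) (simp only: gv sq)
    also have "\<dots> = lam * ((if p = p' then 1 else 0) - 1 / real d)"
      using \<open>p < d\<close> \<open>p' < d\<close> by (simp add: sum_centered_deltas)
    also have "\<dots> = rho_pt d c 0 (p, p) y"
      using \<open>p < d\<close> \<open>p' < d\<close> assms(1) unfolding y
      by (auto simp: rho_pt_def lam_def diag_coef_def swap_coef_def field_simps)
    finally show ?thesis .
  next
    case False
    then have "gram_vec d c (i, i) (p, p) * gram_vec d c (i, i) y = 0" for i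
      unfolding y by (auto simp: gram_vec_def)
    moreover have "rho_pt d c 0 (p, p) y = 0"
      using False unfolding y by (auto simp: rho_pt_def)
    ultimately show ?thesis
      by (simp only: sum.neutral_const)
  qed
  finally show ?thesis .
qed

lemma rho_pt_eq_gram:
  assumes "d \<ge> 2" "0 \<le> c" "c \<le> 1 / (real d * (real d - 1))"
  shows "rho_pt d c 0 x y = (\<Sum>r\<in>{..<d} \<times> {..<d}. gram_vec d c r x * gram_vec d c r y)"
proof -
  obtain p q where x: "x = (p, q)"
    by (cases x)
  show ?thesis
    using sum_gram_vec_products_off_diag[OF _ assms(2)] sum_gram_vec_products_diag[OF assms(1,3)]
    unfolding x by (cases "p = q") simp_all
qed

lemma ptrans_rho0_gram:
  assumes "d \<ge> 2" "0 \<le> c" "c \<le> 1 / (real d * (real d - 1))"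
  shows "ptrans (rho d c 0) x y = (\<Sum>r\<in>{..<d} \<times> {..<d}.
    complex_of_real (gram_vec d c r x) * cnj (complex_of_real (gram_vec d c r y)))"
  unfolding ptrans_rho rho_pt_eq_gram[OF assms] by simp

lemma inner_gram_vec_off_diag:
  assumes "i < d" "j < d" "i \<noteq> j"
  shows "(\<Sum>p<d. \<Sum>q<d. complex_of_real (gram_vec d c (i, j) (p, q)) * T p q) =
    complex_of_real (sqrt (off_coef d c 0)) * T i j"
proof -
  have "complex_of_real (gram_vec d c (i, j) (p, q)) * T p q =
      (if q = j then if p = i then complex_of_real (sqrt (off_coef d c 0)) * T i j else 0 else 0)" for p q
    using assms by (auto simp: gram_vec_def)
  then show ?thesis
    using assms by (simp add: sum.delta)
qed

lemma inner_gram_vec_diag: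
  assumes "i < d"
  shows "(\<Sum>p<d. \<Sum>q<d. complex_of_real (gram_vec d c (i, i) (p, q)) * T p q) =
    complex_of_real (sqrt (- real d * swap_coef d c 0)) * (T i i - (\<Sum>p<d. T p p) / of_nat d)"
proof -
  let ?s = "complex_of_real (sqrt (- real d * swap_coef d c 0))"
  have "(\<Sum>q<d. complex_of_real (gram_vec d c (i, i) (p, q)) * T p q) =
      ?s * ((if p = i then T p p else 0) - T p p / of_nat d)" if "p < d" for p
  proof -
    have "(\<Sum>q<d. complex_of_real (gram_vec d c (i, i) (p, q)) * T p q) =
      (\<Sum>q<d. if q = p then ?s * ((if p = i then 1 else 0) - 1 / of_nat d) * T p p else 0)"
      using that by (intro sum.cong refl) (auto simp: gram_vec_def)
    also have "\<dots> = ?s * ((if p = i then T p p else 0) - T p p / of_nat d)"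
      using that by (simp add: algebra_simps)
    finally show ?thesis .
  qed
  then have "(\<Sum>p<d. \<Sum>q<d. complex_of_real (gram_vec d c (i, i) (p, q)) * T p q) =
      (\<Sum>p<d. ?s * ((if p = i then T p p else 0) - T p p / of_nat d))"
    by (intro sum.cong refl) simp
  also have "\<dots> = ?s * (T i i - (\<Sum>p<d. T p p) / of_nat d)"
    using assms by (simp add: sum_distrib_left[symmetric] sum_subtractf sum_divide_distrib[symmetric])
  finally show ?thesis .
qed

lemma orthogonal_to_gram_vecs:
  assumes "d \<ge> 2" "0 \<le> c" "c < 1 / (real d * (real d - 1))"
    and orth: "\<And>r. r \<in> {..<d} \<times> {..<d} \<Longrightarrow>
      (\<Sum>i<d. \<Sum>j<d. complex_of_real (gram_vec d c r (i, j)) * T i j) = 0"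
  shows "\<And>i j. i < d \<Longrightarrow> j < d \<Longrightarrow> i \<noteq> j \<Longrightarrow> T i j = 0"
    and "\<And>i j. i < d \<Longrightarrow> j < d \<Longrightarrow> T i i = T j j"
proof -
  have "off_coef d c 0 > 0"
    using assms by (simp add: off_coef_def)
  moreover have "- real d * swap_coef d c 0 > 0"
    using assms by (simp add: swap_coef_def mult_pos_neg)
  ultimately have "sqrt (off_coef d c 0) > 0" "sqrt (- real d * swap_coef d c 0) > 0"
    by (simp_all only: real_sqrt_gt_zero)
  then have nz: "complex_of_real (sqrt (off_coef d c 0)) \<noteq> 0"
    "complex_of_real (sqrt (- real d * swap_coef d c 0)) \<noteq> 0"
    by (simp_all only: of_real_eq_0_iff less_irrefl not_False_eq_True)
  show "T i j = 0" if "i < d" "j < d" "i \<noteq> j" for i j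
    using orth[of "(i, j)"] that nz(1) by (simp add: inner_gram_vec_off_diag)
  have mean: "T i i = (\<Sum>p<d. T p p) / of_nat d" if "i < d" for i
    using orth[of "(i, i)"] that nz(2) by (simp add: inner_gram_vec_diag)
  show "T i i = T j j" if "i < d" "j < d" for i j
    using mean[OF that(1)] mean[OF that(2)] by (rule trans[OF _ sym])
qed

lemma rank_le2_gram_kernel_trivial:
  assumes "d \<ge> 3" "0 \<le> c" "c < 1 / (real d * (real d - 1))"
  shows "rank_le2 (idx d n) (idx d n) \<phi> \<Longrightarrow>
    (\<And>rs. rs \<in> lists_of_len ({..<d} \<times> {..<d}) n \<Longrightarrow>
      tensor_inner d n (\<lambda>r x. complex_of_real (gram_vec d c r x)) rs \<phi> = 0) \<Longrightarrow>
    a \<in> idx d n \<Longrightarrow> b \<in> idx d n \<Longrightarrow> \<phi> a b = 0"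
proof (induction n arbitrary: \<phi> a b)
  case 0
  then show ?case
    by (simp add: tensor_inner_def idx_eq_lists_of_len)
next
  case (Suc n)
  let ?G = "\<lambda>r x. complex_of_real (gram_vec d c r x)"
  let ?L = "lists_of_len ({..<d} \<times> {..<d}) n"
  define T where "T i j rs = tensor_inner d n ?G rs (\<lambda>a b. \<phi> (i # a) (j # b))" for i j rs
  have slice_eq_0: "\<phi> (i # a) (j # b) = 0"
    if "i < d" "j < d" "a \<in> idx d n" "b \<in> idx d n" "\<And>rs. rs \<in> ?L \<Longrightarrow> T i j rs = 0" for i j a b
    using Suc.IH[OF rank_le2_slice[OF Suc.prems(1)]] that unfolding T_def by blast
  have orth: "(\<Sum>i<d. \<Sum>j<d. ?G r (i, j) * T i j rs) = 0"
    if "r \<in> {..<d} \<times> {..<d}" "rs \<in> ?L" for r rs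
    using Suc.prems(2)[of "r # rs"] that unfolding T_def by (simp add: tensor_inner_Cons)
  have "d \<ge> 2"
    using assms(1) by simp
  have T_off: "T i j rs = 0" if "i < d" "j < d" "i \<noteq> j" "rs \<in> ?L" for i j rs
    using orthogonal_to_gram_vecs(1)[OF \<open>d \<ge> 2\<close> assms(2,3) orth[OF _ that(4)] that(1-3)] .
  have T_diag: "T i i rs = T j j rs" if "i < d" "j < d" "rs \<in> ?L" for i j rs
    using orthogonal_to_gram_vecs(2)[OF \<open>d \<ge> 2\<close> assms(2,3) orth[OF _ that(3)] that(1,2)] .
  have off: "\<phi> (i # a) (j # b) = 0" if "i < d" "j < d" "i \<noteq> j" "a \<in> idx d n" "b \<in> idx d n" for i j a b
    using slice_eq_0 T_off that by blast
  obtain i0 where i0: "i0 < d" "\<And>a b. a \<in> idx d n \<Longrightarrow> b \<in> idx d n \<Longrightarrow> \<phi> (i0 # a) (i0 # b) = 0"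
    using rank_le2_block_diagonal_obtains_zero_block[OF assms(1) Suc.prems(1) off] by blast
  have "T i0 i0 rs = 0" for rs
    unfolding T_def tensor_inner_def using i0(2) by simp
  then have diag: "\<phi> (i # a) (i # b) = 0" if "i < d" "a \<in> idx d n" "b \<in> idx d n" for i a b
    using slice_eq_0 T_diag[OF _ i0(1)] that by metis
  obtain i a' where "a = i # a'" "i < d" "a' \<in> idx d n"
    using Suc.prems(3) by (rule idx_SucE)
  moreover obtain j b' where "b = j # b'" "j < d" "b' \<in> idx d n"
    using Suc.prems(4) by (rule idx_SucE)
  ultimately show ?case
    using off diag by (cases "i = j") auto
qed

lemma expval_rho0_pos:
  assumes "d \<ge> 3" "0 \<le> c" "c < 1 / (real d * (real d - 1))"
    and "rank_le2 (idx d n) (idx d n) \<phi>" "a \<in> idx d n" "b \<in> idx d n" "\<phi> a b \<noteq> 0"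
  shows "Re (expval d n (ptrans (rho d c 0)) \<phi>) > 0"
proof -
  let ?G = "\<lambda>r x. complex_of_real (gram_vec d c r x)"
  let ?L = "lists_of_len ({..<d} \<times> {..<d}) n"
  have "Re (expval d n (ptrans (rho d c 0)) \<phi>) = (\<Sum>rs\<in>?L. (cmod (tensor_inner d n ?G rs \<phi>))\<^sup>2)"
    using assms(1-3) by (subst expval_gram[OF _ ptrans_rho0_gram]) (simp_all add: Re_sum)
  moreover have "\<exists>rs\<in>?L. tensor_inner d n ?G rs \<phi> \<noteq> 0"
    using rank_le2_gram_kernel_trivial[OF assms(1-4) _ assms(5,6)] assms(7) by blast
  then have "(\<Sum>rs\<in>?L. (cmod (tensor_inner d n ?G rs \<phi>))\<^sup>2) \<noteq> 0"
    by (subst sum_nonneg_eq_0_iff) (auto simp: finite_lists_of_len)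
  ultimately show ?thesis
    by (metis sum_nonneg zero_le_power2 order_le_neq_trans)
qed

theorem mainTheorem10:
  fixes d n :: nat and c :: real
  assumes "d \<ge> 3" and "n \<ge> 1" and "0 \<le> c" and "c < 1 / (real d * (real d - 1))"
  shows "\<exists>\<epsilon>0 > 0. \<forall>\<epsilon>. 0 \<le> \<epsilon> \<and> \<epsilon> \<le> \<epsilon>0 \<and> c + \<epsilon> \<le> 1 / (real d * (real d - 1)) \<longrightarrow>
           (\<forall>\<psi>. schmidt_rank d n \<psi> = 2 \<longrightarrow> 0 \<le> expval d n (ptrans (rho d c \<epsilon>)) \<psi>)"
proof -
  let ?I = "idx d n"
  obtain m where "m > 0" and m: "\<And>\<phi>. rank_le2 ?I ?I \<phi> \<Longrightarrow> sqnorm_on (?I \<times> ?I) (\<lambda>(a, b). \<phi> a b) = 1 \<Longrightarrow>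
      m \<le> Re (expval d n (ptrans (rho d c 0)) \<phi>)"
    using rank_le2_unit_uniform_lower_bound expval_rho0_pos[OF assms(1,3,4)] by metis
  define C where "C = real (d ^ n) ^ 4 * (real n * real d)"
  have "C > 0"
    unfolding C_def using assms(1,2) by simp
  show ?thesis
  proof (intro exI[of _ "m / C"] conjI allI impI)
    show "m / C > 0"
      using \<open>m > 0\<close> \<open>C > 0\<close> by simp
    fix \<epsilon> \<psi>
    assume \<epsilon>: "0 \<le> \<epsilon> \<and> \<epsilon> \<le> m / C \<and> c + \<epsilon> \<le> 1 / (real d * (real d - 1))"
      and "schmidt_rank d n \<psi> = 2"
    then obtain s \<phi> where \<phi>: "rank_le2 ?I ?I \<phi>" "sqnorm_on (?I \<times> ?I) (\<lambda>(a, b). \<phi> a b) = 1"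
      and \<psi>: "\<psi> = (\<lambda>a b. complex_of_real s * \<phi> a b)"
      using schmidt_rank_2_rank_le2 rank_le2_normalize[OF finite_idx] by metis
    have "C * \<epsilon> \<le> m"
      using \<epsilon> \<open>C > 0\<close> by (simp add: field_simps)
    then have "0 \<le> Re (expval d n (ptrans (rho d c \<epsilon>)) \<phi>)"
      using m[OF \<phi>] Re_expval_rho_ge[of d c \<epsilon> n \<phi>] assms \<epsilon> \<phi>(2) unfolding C_def by (simp add: mult_ac)
    then show "0 \<le> expval d n (ptrans (rho d c \<epsilon>)) \<psi>"
      unfolding \<psi> expval_scale by (simp add: less_eq_complex_def Im_expval_rho)
  qed
qed

end
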